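(* Fix $s,b\ge1$, let $\{a_i\}$ be the $(s,b)$-Generacci sequence, and for $n,k\ge0$ let $q_{n,k}$ be the number of $m\in[0,a_{nb+1})$ whose legal decomposition has exactly $k$ summands (so $q_{n,0}=1$, $q_{n,1}=nb$, and $q_{n,k}=0$ if $n<s+1$ and $k\ge2$). If $n\ge s+1$ and $k\le\frac{n+s}{s+1}$ then \[q_{n,k}=b\,q_{n-(s+1),k-1}+q_{n-1,k},\] and if $k>\frac{n+s}{s+1}$ then $q_{n,k}=0$. Moreover, with $n_*=\lceil\frac{n+s}{s+1}\rceil$, the generating function $H(x,y)=\sum_{n\ge0}\sum_{k=0}^{n_*}q_{n,k}x^ny^k$ satisfies \[H(x,y)=\frac{1+by(x+x^2+\dots+x^s)}{1-x-byx^{s+1}}.\]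
   Context: Fix integers $s,b\ge1$. For an increasing sequence of positive integers $\{a_i\}_{i\ge1}$ define bins $\mathcal{B}_n=\{a_{b(n-1)+1},\dots,a_{bn}\}$ for $n\ge1$, $\mathcal{B}_j=\emptyset$ for $j\le 0$. A decomposition $m=a_{\ell_1}+\dots+a_{\ell_k}$ with $a_{\ell_1}>\dots>a_{\ell_k}$ is an $(s,b)$-Generacci legal decomposition if $\{a_{\ell_i},a_{\ell_{i+1}}\}\not\subset\mathcal{B}_{j-s}\cup\dots\cup\mathcal{B}_j$ for all $i,j$. The $(s,b)$-Generacci sequence is the increasing sequence in which each $a_i$ is the smallest positive integer with no legal decomposition using $a_1,\dots,a_{i-1}$; every nonnegative integer has a unique legal decomposition ($0$ being the empty sum). *)

theory Defs
  imports Complex_Main "HOL-Computational_Algebra.Polynomial" "HOL-Computational_Algebra.Formal_Power_Series"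
begin

text \<open>Sequences are indexed from 1; the value at index 0 is irrelevant.
  Bin n (n an integer) is the set of values a_(b(n-1)+1), ..., a_(bn) for n >= 1, empty for n <= 0.\<close>
definition gbin :: "nat \<Rightarrow> (nat \<Rightarrow> nat) \<Rightarrow> int \<Rightarrow> nat set" where
  "gbin b a n = (if n \<ge> 1 then a ` {b * (nat n - 1) + 1 .. b * nat n} else {})"

text \<open>A decomposition is given by the finite set L of (positive) indices of its summands;
  it represents sum a L with card L summands.\<close>
definition legal :: "nat \<Rightarrow> nat \<Rightarrow> (nat \<Rightarrow> nat) \<Rightarrow> nat set \<Rightarrow> bool" where
  "legal s b a L \<longleftrightarrow> finite L \<and> L \<subseteq> {1..} \<and>
     (\<forall>i\<in>L. \<forall>j\<in>L. i < j \<and> (\<forall>l\<in>L. \<not> (i < l \<and> l < j)) \<longrightarrow>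
        (\<forall>J::int. \<not> ({a i, a j} \<subseteq> (\<Union>t\<in>{J - int s .. J}. gbin b a t))))"

definition is_generacci :: "nat \<Rightarrow> nat \<Rightarrow> (nat \<Rightarrow> nat) \<Rightarrow> bool" where
  "is_generacci s b a \<longleftrightarrow> strict_mono_on {1..} a \<and>
     (\<forall>i\<ge>1. a i = (LEAST m. m > 0 \<and>
        \<not> (\<exists>L. legal s b a L \<and> L \<subseteq> {1..<i} \<and> sum a L = m)))"

definition qcount :: "nat \<Rightarrow> nat \<Rightarrow> (nat \<Rightarrow> nat) \<Rightarrow> nat \<Rightarrow> int \<Rightarrow> nat" where
  "qcount s b a n k = card {m. m < a (n * b + 1) \<and>
     (\<exists>L. legal s b a L \<and> sum a L = m \<and> int (card L) = k)}"

definition nstar :: "nat \<Rightarrow> nat \<Rightarrow> nat" where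
  "nstar s n = nat \<lceil>real (n + s) / real (s + 1)\<rceil>"

text \<open>H(x,y) as a formal power series in x whose coefficients are polynomials in y.\<close>
definition genH :: "nat \<Rightarrow> nat \<Rightarrow> (nat \<Rightarrow> nat) \<Rightarrow> int poly fps" where
  "genH s b a = Abs_fps (\<lambda>n. \<Sum>k=0..nstar s n. monom (int (qcount s b a n (int k))) k)"

end

theory Submission
  imports Defs
begin

unbundle fps_syntax

text \<open>Legality only compares bin numbers, and since the bin number is monotone in the index,
  separating adjacent summands is the same as separating all pairs. Removing the largest summand
  a_i of a legal decomposition leaves a legal decomposition using only indices up to the last index
  compatible with i. Splitting the legal decompositions below i + 1 according to whether they
  use a_i gives, by induction on i, that the sum map is a bijection from them onto [0, a_(i+1))
  (with a_(i+1) = a_i + a_(p+1), p the last index compatible with i). So q n k counts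
  the legal index sets of size k in the first n bins, and splitting those by whether they meet
  the n-th bin (b choices for the summand there, the rest in the first n - s - 1 bins) gives the
  recurrence for q, from which the vanishing of q and the rational form of H follow.\<close>

lemma div_eq_iff_bounds:
  fixes m n q :: nat
  assumes "n > 0"
  shows "m div n = q \<longleftrightarrow> n * q \<le> m \<and> m < n * q + n"
  using assms div_nat_eqI[of n q m] times_div_less_eq_dividend[of n m] dividend_less_times_div[of n m]
  by auto

lemma sep_adjacent_imp_sep:
  fixes f :: "nat \<Rightarrow> nat" and L :: "nat set"
  assumes "mono f"
    and adjacent: "\<And>i j. i \<in> L \<Longrightarrow> j \<in> L \<Longrightarrow> i < j \<Longrightarrow> (\<forall>l\<in>L. \<not> (i < l \<and> l < j)) \<Longrightarrow> f i + s < f j"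
    and "i \<in> L" "j \<in> L" "i < j"
  shows "f i + s < f j"
proof -
  define l where "l = (LEAST l. l \<in> L \<and> i < l)"
  have l: "l \<in> L" "i < l" and "l \<le> j"
    using LeastI[of "\<lambda>l. l \<in> L \<and> i < l" j] Least_le[of "\<lambda>l. l \<in> L \<and> i < l" j] assms(3-)
    by (auto simp: l_def)
  have "\<forall>x\<in>L. \<not> (i < x \<and> x < l)"
    using not_less_Least[of _ "\<lambda>l. l \<in> L \<and> i < l"] by (auto simp: l_def)
  then have "f i + s < f l" using adjacent[OF \<open>i \<in> L\<close> l] by blast
  also have "f l \<le> f j" using \<open>mono f\<close> \<open>l \<le> j\<close> by (rule monoD)
  finally show ?thesis .
qed

lemma insert_greater_eq_iff:
  fixes i j :: nat
  assumes "\<forall>l\<in>L. l < i" and "\<forall>l\<in>M. l < j"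
  shows "insert i L = insert j M \<longleftrightarrow> i = j \<and> L = M"
proof
  assume eq: "insert i L = insert j M"
  have "i \<in> insert j M" by (simp flip: eq)
  moreover have "j \<in> insert i L" by (simp add: eq)
  ultimately have "i = j" using assms by (metis insertE less_asym)
  moreover have "i \<notin> L" "j \<notin> M" using assms by auto
  ultimately show "i = j \<and> L = M" using eq insert_ident by metis
qed simp

lemma inj_on_insert_greater:
  fixes S :: "(nat \<times> nat set) set"
  assumes "\<And>i L. (i, L) \<in> S \<Longrightarrow> \<forall>j\<in>L. j < i"
  shows "inj_on (\<lambda>(i, L). insert i L) S"
proof (rule inj_onI)
  fix x y assume "x \<in> S" "y \<in> S" and eq: "(\<lambda>(i, L). insert i L) x = (\<lambda>(i, L). insert i L) y"
  obtain i L j M where "x = (i, L)" "y = (j, M)" by fastforce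
  then show "x = y" using eq insert_greater_eq_iff[OF assms assms] \<open>x \<in> S\<close> \<open>y \<in> S\<close> by simp
qed

lemma fps_linear_recurrence_mult:
  fixes H :: "'a::comm_ring_1 fps"
  assumes H0: "H $ 0 = 1" and rec: "\<And>n. n \<ge> 1 \<Longrightarrow> H $ n = H $ (n - 1) + c * H $ (n - 1 - s)"
  shows "H * (1 - fps_X - fps_const c * fps_X ^ (s + 1)) = 1 + fps_const c * (\<Sum>i=1..s. fps_X ^ i)"
proof (rule fps_ext)
  fix n
  have eq: "H * (1 - fps_X - fps_const c * fps_X ^ (s + 1))
      = H - fps_X * H - fps_const c * (fps_X ^ (s + 1) * H)"
    by (simp add: right_diff_distrib mult.assoc mult.commute mult.left_commute)
  have "(H * (1 - fps_X - fps_const c * fps_X ^ (s + 1))) $ n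
      = H $ n - (if n = 0 then 0 else H $ (n - 1)) - c * (if n < s + 1 then 0 else H $ (n - (s + 1)))"
    unfolding eq fps_sub_nth fps_mult_left_const_nth fps_X_mult_nth fps_X_power_mult_nth by simp
  also have "\<dots> = (if n = 0 then 1 else 0) + c * (if 1 \<le> n \<and> n \<le> s then 1 else 0)"
  proof (cases "n = 0")
    case False
    then have "H $ n = H $ (n - 1) + c * H $ (n - 1 - s)" by (simp add: rec)
    moreover have "n - 1 - s = 0" if "n \<le> s" using that by simp
    ultimately show ?thesis using False H0 by (auto simp: Suc_diff_Suc)
  qed (simp add: H0)
  also have "\<dots> = (1 + fps_const c * (\<Sum>i=1..s. fps_X ^ i)) $ n"
    by (simp add: fps_sum_nth)
  finally show "(H * (1 - fps_X - fps_const c * fps_X ^ (s + 1))) $ n = (1 + fps_const c * (\<Sum>i=1..s. fps_X ^ i)) $ n" .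
qed

lemma mem_gbin_iff:
  assumes b: "b \<ge> 1" and mono: "strict_mono_on {1..} a" and i: "i \<ge> 1"
  shows "a i \<in> gbin b a t \<longleftrightarrow> t = int ((i - 1) div b) + 1"
proof (cases "t \<ge> 1")
  case True
  define T where "T = nat t - 1"
  have t: "t = int T + 1" and nat_t: "nat t = Suc T" using True by (auto simp: T_def)
  have "a i \<in> gbin b a t \<longleftrightarrow> i \<in> {b * T + 1 .. b * T + b}"
    using True i strict_mono_on_imp_inj_on[OF mono]
    by (auto simp: gbin_def nat_t inj_on_image_mem_iff)
  also have "\<dots> \<longleftrightarrow> (i - 1) div b = T"
    using i b by (auto simp: div_eq_iff_bounds)
  finally show ?thesis by (auto simp: t)
qed (simp add: gbin_def)

lemma separated_pair_iff:
  assumes b: "b \<ge> 1" and mono: "strict_mono_on {1..} a" and "1 \<le> i" "i < j"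
  shows "(\<forall>J::int. \<not> {a i, a j} \<subseteq> (\<Union>t\<in>{J - int s .. J}. gbin b a t))
    \<longleftrightarrow> (i - 1) div b + s < (j - 1) div b"
proof -
  define p q where "p = (i - 1) div b" and "q = (j - 1) div b"
  have "p \<le> q" using \<open>i < j\<close> by (simp add: p_def q_def div_le_mono)
  moreover have eq: "{a i, a j} \<subseteq> (\<Union>t\<in>{J - int s .. J}. gbin b a t) \<longleftrightarrow>
      int p + 1 \<in> {J - int s .. J} \<and> int q + 1 \<in> {J - int s .. J}" for J
    using mem_gbin_iff[OF b mono] assms by (auto simp: p_def q_def)
  ultimately show ?thesis
    unfolding p_def[symmetric] q_def[symmetric]
  proof (intro iffI allI)
    assume "\<forall>J. \<not> {a i, a j} \<subseteq> (\<Union>t\<in>{J - int s .. J}. gbin b a t)"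
    then have "\<not> {a i, a j} \<subseteq> (\<Union>t\<in>{int q + 1 - int s .. int q + 1}. gbin b a t)" ..
    then show "p + s < q" unfolding eq atLeastAtMost_iff using \<open>p \<le> q\<close> by linarith
  qed auto
qed

text \<open>Bins are numbered from 0 here: index i \<ge> 1 lies in bin (i - 1) div b.\<close>
definition bin_legal :: "nat \<Rightarrow> nat \<Rightarrow> nat set \<Rightarrow> bool" where
  "bin_legal s b L \<longleftrightarrow> finite L \<and> L \<subseteq> {1..} \<and>
     (\<forall>i\<in>L. \<forall>j\<in>L. i < j \<longrightarrow> (i - 1) div b + s < (j - 1) div b)"

lemma legal_iff_bin_legal:
  assumes b: "b \<ge> 1" and mono: "strict_mono_on {1..} a"
  shows "legal s b a L \<longleftrightarrow> bin_legal s b L"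
proof -
  have mono_bin: "mono (\<lambda>i. (i - 1) div b)"
    by (simp add: mono_def div_le_mono diff_le_mono)
  have "(\<forall>J::int. \<not> {a i, a j} \<subseteq> (\<Union>t\<in>{J - int s .. J}. gbin b a t))
      \<longleftrightarrow> (i - 1) div b + s < (j - 1) div b" if "L \<subseteq> {1..}" "i \<in> L" "i < j" for i j
    using that by (intro separated_pair_iff[OF b mono]) auto
  then show ?thesis
    unfolding legal_def bin_legal_def
    using sep_adjacent_imp_sep[OF mono_bin, of L s] by metis
qed

lemma bin_legal_empty [simp]: "bin_legal s b {}"
  by (simp add: bin_legal_def)

text \<open>The largest index that may precede i in a legal decomposition (0 if there is none).\<close>
definition last_compatible :: "nat \<Rightarrow> nat \<Rightarrow> nat \<Rightarrow> nat" where
  "last_compatible s b i = b * ((i - 1) div b - s)"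

lemma bin_sep_iff_le_last_compatible:
  assumes "b \<ge> 1" and "j \<ge> 1"
  shows "(j - 1) div b + s < (i - 1) div b \<longleftrightarrow> j \<le> last_compatible s b i"
proof -
  have "(j - 1) div b + s < (i - 1) div b \<longleftrightarrow> (j - 1) div b < (i - 1) div b - s" by auto
  also have "\<dots> \<longleftrightarrow> j - 1 < ((i - 1) div b - s) * b"
    using assms by (intro div_less_iff_less_mult) auto
  finally show ?thesis using assms by (auto simp: last_compatible_def mult.commute)
qed

lemma last_compatible_less: "i \<ge> 1 \<Longrightarrow> last_compatible s b i < i"
proof -
  assume "i \<ge> 1"
  have "last_compatible s b i \<le> b * ((i - 1) div b)" by (simp add: last_compatible_def)
  also have "\<dots> \<le> i - 1" by simp
  finally show ?thesis using \<open>i \<ge> 1\<close> by linarith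
qed

lemma bin_legal_insert_max_iff:
  assumes b: "b \<ge> 1" and "i \<ge> 1" and less: "\<forall>j\<in>L. j < i"
  shows "bin_legal s b (insert i L) \<longleftrightarrow> bin_legal s b L \<and> L \<subseteq> {1..last_compatible s b i}"
  using assms bin_sep_iff_le_last_compatible[OF b] unfolding bin_legal_def
  by (auto simp: subset_iff)

definition legal_below :: "nat \<Rightarrow> nat \<Rightarrow> nat \<Rightarrow> nat set set" where
  "legal_below s b i = {L. bin_legal s b L \<and> L \<subseteq> {1..<i}}"

lemma legal_below_Suc:
  assumes "b \<ge> 1" and "i \<ge> 1"
  shows "legal_below s b (Suc i)
    = legal_below s b i \<union> insert i ` legal_below s b (Suc (last_compatible s b i))"
proof (intro equalityI subsetI)
  fix L assume L: "L \<in> legal_below s b (Suc i)"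
  show "L \<in> legal_below s b i \<union> insert i ` legal_below s b (Suc (last_compatible s b i))"
  proof (cases "i \<in> L")
    case True
    define L' where "L' = L - {i}"
    have L_eq: "L = insert i L'" using True by (auto simp: L'_def)
    have "\<forall>j\<in>L'. j < i" using L by (auto simp: legal_below_def L'_def)
    then have "L' \<in> legal_below s b (Suc (last_compatible s b i))"
      using L bin_legal_insert_max_iff[OF assms] unfolding L_eq
      by (auto simp: legal_below_def atLeastLessThanSuc_atLeastAtMost)
    then show ?thesis using L_eq by blast
  next
    case False
    then show ?thesis using L by (auto simp: legal_below_def less_Suc_eq)
  qed
next
  fix L assume "L \<in> legal_below s b i \<union> insert i ` legal_below s b (Suc (last_compatible s b i))"
  then consider "L \<in> legal_below s b i"
    | L' where "L = insert i L'" "L' \<in> legal_below s b (Suc (last_compatible s b i))"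
    by blast
  then show "L \<in> legal_below s b (Suc i)"
  proof cases
    case 2
    then have "\<forall>j\<in>L'. j < i"
      using last_compatible_less[OF \<open>i \<ge> 1\<close>, of s b] by (auto simp: legal_below_def)
    then show ?thesis
      using 2 \<open>i \<ge> 1\<close> bin_legal_insert_max_iff[OF assms]
      by (force simp: legal_below_def atLeastLessThanSuc_atLeastAtMost)
  qed (auto simp: legal_below_def)
qed

definition legal_sets :: "nat \<Rightarrow> nat \<Rightarrow> nat \<Rightarrow> nat \<Rightarrow> nat set set" where
  "legal_sets s b N k = {L. bin_legal s b L \<and> L \<subseteq> {1..N} \<and> card L = k}"

definition legal_count :: "nat \<Rightarrow> nat \<Rightarrow> nat \<Rightarrow> nat \<Rightarrow> nat" where
  "legal_count s b n k = card (legal_sets s b (n * b) k)"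

lemma finite_legal_sets: "finite (legal_sets s b N k)"
  by (rule finite_subset[of _ "Pow {1..N}"]) (auto simp: legal_sets_def)

lemma legal_count_0: "legal_count s b n 0 = 1"
proof -
  have "legal_sets s b (n * b) 0 = {{}}"
    by (auto simp: legal_sets_def bin_legal_def)
  then show ?thesis by (simp add: legal_count_def)
qed

lemma legal_count_0_Suc: "legal_count s b 0 (Suc k) = 0"
  by (auto simp: legal_count_def legal_sets_def)

lemma last_compatible_last_block:
  assumes b: "b \<ge> 1" and i: "i \<in> {(n - 1) * b <.. n * b}"
  shows "last_compatible s b i = (n - 1 - s) * b"
proof -
  obtain m where n: "n = Suc m" using i by (cases n) auto
  have "(i - 1) div b = m"
    using i b by (auto simp: div_eq_iff_bounds n mult.commute)
  then show ?thesis by (simp add: last_compatible_def n mult.commute)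
qed

lemma legal_sets_below_last_block:
  assumes "L \<in> legal_sets s b ((n - 1 - s) * b) k" and "i \<in> {(n - 1) * b <.. n * b}"
  shows "\<forall>j\<in>L. j < i"
proof
  fix j assume "j \<in> L"
  then have "j \<le> (n - 1 - s) * b" using assms by (auto simp: legal_sets_def)
  also have "\<dots> \<le> (n - 1) * b" by (intro mult_le_mono1) simp
  finally show "j < i" using assms by simp
qed

lemma legal_sets_last_block:
  assumes b: "b \<ge> 1"
  shows "legal_sets s b (n * b) (Suc k) = legal_sets s b ((n - 1) * b) (Suc k)
    \<union> (\<lambda>(i, L). insert i L) ` ({(n - 1) * b <.. n * b} \<times> legal_sets s b ((n - 1 - s) * b) k)"
    (is "?S = ?A \<union> ?B")
proof (intro equalityI subsetI)
  fix L assume L: "L \<in> ?S"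
  show "L \<in> ?A \<union> ?B"
  proof (cases "L \<subseteq> {1..(n - 1) * b}")
    case False
    have fin: "finite L" and "L \<noteq> {}" using L by (auto simp: legal_sets_def bin_legal_def)
    define i where "i = Max L"
    have "i \<in> L" using fin \<open>L \<noteq> {}\<close> by (simp add: i_def)
    moreover have "i > (n - 1) * b"
    proof -
      obtain x where "x \<in> L" "x \<notin> {1..(n - 1) * b}" using False by blast
      moreover have "x \<ge> 1" using L \<open>x \<in> L\<close> by (auto simp: legal_sets_def)
      ultimately have "(n - 1) * b < x" by simp
      also have "x \<le> i" using Max_ge[OF fin \<open>x \<in> L\<close>] by (simp add: i_def)
      finally show ?thesis .
    qed
    ultimately have i: "i \<in> {(n - 1) * b <.. n * b}" using L by (auto simp: legal_sets_def)
    have less: "\<forall>j\<in>L - {i}. j < i" using Max_ge[OF fin] by (auto simp: i_def le_neq_implies_less)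
    have "bin_legal s b (insert i (L - {i}))"
      using L \<open>i \<in> L\<close> by (simp add: legal_sets_def insert_absorb)
    then have "L - {i} \<in> legal_sets s b ((n - 1 - s) * b) k"
      using bin_legal_insert_max_iff[OF b _ less] i L fin \<open>i \<in> L\<close>
      by (auto simp: legal_sets_def last_compatible_last_block[OF b i])
    moreover have "L = insert i (L - {i})" using \<open>i \<in> L\<close> by blast
    ultimately show ?thesis using i by blast
  next
    case True
    then have "L \<in> ?A" using L by (simp add: legal_sets_def)
    then show ?thesis ..
  qed
next
  fix L assume "L \<in> ?A \<union> ?B"
  then consider "L \<in> ?A"
    | i L' where "L = insert i L'" "i \<in> {(n - 1) * b <.. n * b}" "L' \<in> legal_sets s b ((n - 1 - s) * b) k"
    by (auto simp only: Un_iff image_iff mem_Sigma_iff case_prod_beta fst_conv snd_conv)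
  then show "L \<in> ?S"
  proof cases
    case 1
    have "{1..(n - 1) * b} \<subseteq> {1..n * b}" by auto
    then show ?thesis using 1 unfolding legal_sets_def by blast
  next
    case 2
    have less: "\<forall>j\<in>L'. j < i" using 2 by (intro legal_sets_below_last_block)
    then have "bin_legal s b L"
      using 2 bin_legal_insert_max_iff[OF b _ less] by (auto simp: legal_sets_def last_compatible_last_block[OF b])
    moreover have "card L = Suc k" using 2 less by (auto simp: legal_sets_def bin_legal_def)
    ultimately show ?thesis using 2 less by (force simp: legal_sets_def)
  qed
qed

lemma legal_count_Suc:
  assumes "b \<ge> 1" and "n \<ge> 1"
  shows "legal_count s b n (Suc k) = legal_count s b (n - 1) (Suc k) + b * legal_count s b (n - 1 - s) k"
proof -
  let ?I = "{(n - 1) * b <.. n * b}" and ?T = "legal_sets s b ((n - 1 - s) * b) k"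
  have "inj_on (\<lambda>(i, L). insert i L) (?I \<times> ?T)"
    by (rule inj_on_insert_greater) (use legal_sets_below_last_block in blast)
  moreover have "card ?I = b" using \<open>n \<ge> 1\<close> by (cases n) simp_all
  moreover have "legal_sets s b ((n - 1) * b) (Suc k) \<inter> (\<lambda>(i, L). insert i L) ` (?I \<times> ?T) = {}"
  proof -
    have "\<not> insert i L \<subseteq> {1..(n - 1) * b}" if "i \<in> ?I" for i L using that by auto
    then show ?thesis unfolding legal_sets_def by blast
  qed
  ultimately show ?thesis
    unfolding legal_count_def legal_sets_last_block[OF \<open>b \<ge> 1\<close>, where n = n]
    by (simp add: card_Un_disjoint finite_legal_sets card_image card_cartesian_product)
qed

lemma legal_count_eq_0:
  assumes "b \<ge> 1"
  shows "n + s < k * (s + 1) \<Longrightarrow> legal_count s b n k = 0"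
proof (induction n arbitrary: k rule: less_induct)
  case (less n)
  then obtain k' where k: "k = Suc k'" by (cases k) auto
  show ?case
  proof (cases "n = 0")
    case False
    have "legal_count s b (n - 1) (Suc k') = 0" using less False k by simp
    moreover have "legal_count s b (n - 1 - s) k' = 0"
    proof (cases k')
      case 0
      then show ?thesis using less.prems k False by simp
    next
      case (Suc k'')
      show ?thesis
      proof (cases "n - 1 - s = 0")
        case True
        then show ?thesis by (simp add: Suc legal_count_0_Suc)
      next
        case False
        then show ?thesis using less k by (intro less.IH) (auto simp: algebra_simps)
      qed
    qed
    ultimately show ?thesis using legal_count_Suc[OF assms, of n s k'] False k by simp
  qed (simp add: k legal_count_0_Suc)
qed

lemma qcount_neg: "k < 0 \<Longrightarrow> qcount s b a n k = 0"
  by (simp add: qcount_def)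

lemma nstar_less_imp:
  assumes "nstar s n < k"
  shows "n + s < k * (s + 1)"
proof -
  have "real (n + s) / real (s + 1) \<le> real (nstar s n)"
    by (simp add: nstar_def)
  also have "\<dots> < real k" using assms by simp
  finally have "real (n + s) < real k * real (s + 1)" by (simp add: divide_less_eq)
  then have "real (n + s) < real (k * (s + 1))" by (simp only: of_nat_mult)
  then show ?thesis by (simp only: of_nat_less_iff)
qed

lemma of_nat_times_X_mult: "(of_nat b * [:0, 1:]) * (p :: int poly) = smult (of_nat b) (pCons 0 p)"
  by (simp add: of_nat_poly)

locale generacci =
  fixes s b :: nat and a :: "nat \<Rightarrow> nat"
  assumes b_pos: "b \<ge> 1" and generacci: "is_generacci s b a"
begin

lemma a_strict_mono: "strict_mono_on {1..} a"
  using generacci by (simp add: is_generacci_def)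

lemma a_eq_Least:
  assumes "i \<ge> 1"
  shows "a i = (LEAST m. m > 0 \<and> m \<notin> sum a ` legal_below s b i)"
proof -
  have "a i = (LEAST m. m > 0 \<and> \<not> (\<exists>L. legal s b a L \<and> L \<subseteq> {1..<i} \<and> sum a L = m))"
    using generacci assms by (simp add: is_generacci_def)
  also have "(\<lambda>m. \<exists>L. legal s b a L \<and> L \<subseteq> {1..<i} \<and> sum a L = m) = (\<lambda>m. m \<in> sum a ` legal_below s b i)"
    unfolding legal_iff_bin_legal[OF b_pos a_strict_mono] legal_below_def image_iff by blast
  finally show ?thesis by simp
qed

lemma bij_betw_sum_legal_below: "i \<ge> 1 \<Longrightarrow> bij_betw (sum a) (legal_below s b i) {0..<a i}"
proof (induction i rule: less_induct)
  case (less i)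
  show ?case
  proof (cases "i = 1")
    case True
    have "legal_below s b 1 = {{}}" by (auto simp: legal_below_def)
    moreover have "a 1 = 1"
      using a_eq_Least[of 1] \<open>legal_below s b 1 = {{}}\<close> by (simp add: Least_equality)
    ultimately show ?thesis using True by (simp add: bij_betw_def)
  next
    case False
    then obtain j where i: "i = Suc j" and "j \<ge> 1" using less.prems by (cases i) auto
    define p where "p = Suc (last_compatible s b j)"
    have "p < i" using last_compatible_less[OF \<open>j \<ge> 1\<close>] by (simp add: p_def i)
    have low: "bij_betw (sum a) (legal_below s b j) {0..<a j}"
      using less.IH \<open>j \<ge> 1\<close> by (simp add: i)
    have p: "bij_betw (sum a) (legal_below s b p) {0..<a p}"
      using less.IH \<open>p < i\<close> by (simp add: p_def)
    have j_notin: "j \<notin> L" and "finite L" if "L \<in> legal_below s b p" for L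
      using that last_compatible_less[OF \<open>j \<ge> 1\<close>, of s b]
      by (auto simp: legal_below_def p_def bin_legal_def)
    have "inj_on (insert j) (legal_below s b p)"
      by (rule inj_onI) (metis insert_ident j_notin)
    then have "bij_betw (sum a) (insert j ` legal_below s b p) {a j..<a j + a p}
        \<longleftrightarrow> bij_betw (sum a \<circ> insert j) (legal_below s b p) {a j..<a j + a p}"
      by (intro bij_betw_comp_iff inj_on_imp_bij_betw)
    also have "\<dots> \<longleftrightarrow> bij_betw ((+) (a j) \<circ> sum a) (legal_below s b p) {a j..<a j + a p}"
      by (rule bij_betw_cong) (simp add: j_notin \<open>\<And>L. L \<in> legal_below s b p \<Longrightarrow> finite L\<close>)
    moreover have "bij_betw ((+) (a j)) {0..<a p} {a j..<a j + a p}"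
      by (simp add: bij_betw_def add.commute)
    ultimately have high: "bij_betw (sum a) (insert j ` legal_below s b p) {a j..<a j + a p}"
      using bij_betw_trans[OF p] by blast
    have bij: "bij_betw (sum a) (legal_below s b i) {0..<a j + a p}"
      using bij_betw_combine[OF low high] legal_below_Suc[OF b_pos \<open>j \<ge> 1\<close>]
      by (simp add: i p_def ivl_disj_un_two(3))
    have "{} \<in> legal_below s b p" by (simp add: legal_below_def)
    then have "a p > 0" using p by (force simp: bij_betw_def)
    then have "a i = a j + a p"
      using a_eq_Least[OF less.prems] bij by (auto simp: bij_betw_def intro!: Least_equality)
    then show ?thesis using bij by simp
  qed
qed

lemma sum_less_iff_subset:
  assumes "bin_legal s b L"
  shows "sum a L < a (Suc N) \<longleftrightarrow> L \<subseteq> {1..N}"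
proof
  assume "L \<subseteq> {1..N}"
  then have "L \<in> legal_below s b (Suc N)"
    using assms by (simp add: legal_below_def atLeastLessThanSuc_atLeastAtMost)
  then show "sum a L < a (Suc N)"
    using bij_betw_sum_legal_below[of "Suc N"] by (auto simp: bij_betw_def)
next
  assume less: "sum a L < a (Suc N)"
  show "L \<subseteq> {1..N}"
  proof
    fix j assume "j \<in> L"
    then have "j \<ge> 1" and "a j \<le> sum a L"
      using assms by (auto simp: bin_legal_def intro: member_le_sum)
    then have "j < Suc N"
      using less strict_mono_on_less[OF a_strict_mono, of j "Suc N"] by simp
    then show "j \<in> {1..N}" using \<open>j \<ge> 1\<close> by simp
  qed
qed

lemma qcount_eq_legal_count:
  assumes "k \<ge> 0"
  shows "qcount s b a n k = legal_count s b n (nat k)"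
proof -
  have "{m. m < a (n * b + 1) \<and> (\<exists>L. legal s b a L \<and> sum a L = m \<and> int (card L) = k)}
      = sum a ` legal_sets s b (n * b) (nat k)"
    using assms sum_less_iff_subset[of _ "n * b"]
    by (auto simp: legal_iff_bin_legal[OF b_pos a_strict_mono] legal_sets_def)
  moreover have "inj_on (sum a) (legal_sets s b (n * b) (nat k))"
  proof (rule inj_on_subset)
    show "inj_on (sum a) (legal_below s b (Suc (n * b)))"
      using bij_betw_sum_legal_below by (simp add: bij_betw_def)
    show "legal_sets s b (n * b) (nat k) \<subseteq> legal_below s b (Suc (n * b))"
      by (auto simp: legal_sets_def legal_below_def atLeastLessThanSuc_atLeastAtMost)
  qed
  ultimately show ?thesis by (simp add: qcount_def legal_count_def card_image)
qed

lemma qcount_recurrence: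
  assumes "n \<ge> 1" and "k \<ge> 0"
  shows "qcount s b a n k = b * qcount s b a (n - (s + 1)) (k - 1) + qcount s b a (n - 1) k"
proof (cases "k = 0")
  case True
  then show ?thesis by (simp add: qcount_eq_legal_count qcount_neg legal_count_0)
next
  case False
  define k' where "k' = nat (k - 1)"
  have "nat k = Suc k'" and "k - 1 \<ge> 0" using False assms by (auto simp: k'_def)
  then show ?thesis
    using legal_count_Suc[OF b_pos assms(1), of s k'] assms(2)
    by (simp add: qcount_eq_legal_count k'_def)
qed

lemma qcount_eq_0:
  assumes "real (n + s) / real (s + 1) < real_of_int k"
  shows "qcount s b a n k = 0"
proof -
  have "real (n + s) < real_of_int k * real (s + 1)"
    using assms by (simp add: pos_divide_less_eq)
  then have less: "int (n + s) < k * int (s + 1)"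
    by (metis of_int_less_iff of_int_mult of_int_of_nat_eq)
  then have "0 < k * int (s + 1)" by linarith
  then have "k \<ge> 0" by (simp add: zero_less_mult_iff)
  then have "int (n + s) < int (nat k * (s + 1))" using less by (simp add: algebra_simps)
  then have "n + s < nat k * (s + 1)" by (simp only: of_nat_less_iff)
  then show ?thesis by (simp add: qcount_eq_legal_count legal_count_eq_0[OF b_pos])
qed

lemma coeff_genH: "coeff (genH s b a $ n) k = int (legal_count s b n k)"
proof (cases "k \<le> nstar s n")
  case True
  then show ?thesis by (simp add: genH_def coeff_sum qcount_eq_legal_count)
next
  case False
  then have "legal_count s b n k = 0" by (intro legal_count_eq_0[OF b_pos] nstar_less_imp) simp
  then show ?thesis using False by (simp add: genH_def coeff_sum)
qed

lemma genH_nth_0: "genH s b a $ 0 = 1"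
proof (rule poly_eqI)
  fix k
  show "coeff (genH s b a $ 0) k = coeff 1 k"
    by (cases k) (simp_all add: coeff_genH legal_count_0 legal_count_0_Suc)
qed

lemma genH_nth:
  assumes "n \<ge> 1"
  shows "genH s b a $ n = genH s b a $ (n - 1) + (of_nat b * [:0, 1:]) * genH s b a $ (n - 1 - s)"
proof (rule poly_eqI)
  fix k
  show "coeff (genH s b a $ n) k = coeff (genH s b a $ (n - 1) + (of_nat b * [:0, 1:]) * genH s b a $ (n - 1 - s)) k"
    by (cases k) (simp_all add: of_nat_times_X_mult coeff_genH legal_count_0 legal_count_Suc[OF b_pos assms] of_nat_poly)
qed

end

theorem propositionA1:
  fixes s b :: nat and a :: "nat \<Rightarrow> nat"
  assumes "s \<ge> 1" and "b \<ge> 1" and "is_generacci s b a"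
  shows "(\<forall>n k. n \<ge> s + 1 \<and> 0 \<le> k \<and> real_of_int k \<le> real (n + s) / real (s + 1) \<longrightarrow>
            qcount s b a n k = b * qcount s b a (n - (s + 1)) (k - 1) + qcount s b a (n - 1) k)
       \<and> (\<forall>n k. real_of_int k > real (n + s) / real (s + 1) \<longrightarrow> qcount s b a n k = 0)
       \<and> genH s b a * (1 - fps_X - fps_const (of_nat b * [:0, 1:]) * fps_X ^ (s + 1))
           = 1 + fps_const (of_nat b * [:0, 1:]) * (\<Sum>i=1..s. fps_X ^ i)"
proof -
  interpret generacci s b a using assms(2,3) by unfold_locales
  have "genH s b a * (1 - fps_X - fps_const (of_nat b * [:0, 1:]) * fps_X ^ (s + 1))
      = 1 + fps_const (of_nat b * [:0, 1:]) * (\<Sum>i=1..s. fps_X ^ i)"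
    by (rule fps_linear_recurrence_mult) (simp_all add: genH_nth_0 genH_nth)
  then show ?thesis using qcount_recurrence qcount_eq_0 by simp
qed

end
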